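(* Let $n\ge3$, $k\ge0$, let $R$ be a maximal reversible set in $G_n^k$, and let $x_1,x_2,\dots,x_{k+1}$ be a consistent labeling of $A(R)$. Then for each $i\in\{1,\dots,k+1\}$, $|B(x_i,R)|\le k+2-i$.
   Context: For integers $n\ge3$, $k\ge0$, the crown $S_n^k$ is the poset with ground set $A\cup B$, $A=\{a_1,\dots,a_{n+k}\}$, $B=\{b_1,\dots,b_{n+k}\}$, indices cyclic modulo $n+k$; elements of $A$ are pairwise incomparable, as are elements of $B$, and $a_i$ is incomparable to $b_j$ when $j\in\{i,\dots,i+k\}$ (mod $n+k$), while $a_i<b_j$ otherwise. $\mathrm{Inc}(A,B)$ is the set of pairs $(a,b)\in A\times B$ with $a$ incomparable to $b$; $G_n^k$ has vertex set $\mathrm{Inc}(A,B)$, with $(a,b)$ adjacent to $(x,y)$ iff $a<y$ and $x<b$. A set $R\subseteq\mathrm{Inc}(A,B)$ is reversible if some linear extension $L$ of $S_n^k$ has $b<a$ in $L$ for all $(a,b)\in R$; maximal reversible means maximal under inclusion among reversible sets. For $R\subseteq\mathrm{Inc}(A,B)$ and $a\in A$, $B(a,R)=\{b\in B:(a,b)\in R\}$, and $A(R)=\{a\in A: B(a,R)\ne\emptyset\}$. For a maximal reversible set $R$ one has $|A(R)|=k+1$, and the sets $B(a,R)$, $a\in A(R)$, form a chain under inclusion. A consistent labeling of $A(R)$ is a labeling $A(R)=\{x_1,\dots,x_{k+1}\}$ such that $B(x_\beta,R)\subseteq B(x_\alpha,R)$ whenever $\alpha<\beta$. *)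

theory Defs
  imports Main
begin

text \<open>Elements of the crown S_n^k: A-elements a_i and B-elements b_j, indices in {0..<n+k}
  (cyclic modulo n+k).\<close>
datatype elt = Aelt nat | Belt nat

definition ground :: "nat \<Rightarrow> nat \<Rightarrow> elt set" where
  "ground n k = {Aelt i | i. i < n + k} \<union> {Belt j | j. j < n + k}"

definition crown_inc :: "nat \<Rightarrow> nat \<Rightarrow> nat \<Rightarrow> nat \<Rightarrow> bool" where
  "crown_inc n k i j \<longleftrightarrow> (j + (n + k) - i) mod (n + k) \<le> k"

definition crown_less :: "nat \<Rightarrow> nat \<Rightarrow> elt \<Rightarrow> elt \<Rightarrow> bool" where
  "crown_less n k x y \<longleftrightarrow>
     (\<exists>i j. x = Aelt i \<and> y = Belt j \<and> i < n + k \<and> j < n + k \<and> \<not> crown_inc n k i j)"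

definition Inc :: "nat \<Rightarrow> nat \<Rightarrow> (elt \<times> elt) set" where
  "Inc n k = {(Aelt i, Belt j) | i j. i < n + k \<and> j < n + k \<and> crown_inc n k i j}"

definition linear_extension :: "nat \<Rightarrow> nat \<Rightarrow> (elt \<times> elt) set \<Rightarrow> bool" where
  "linear_extension n k L \<longleftrightarrow>
     L \<subseteq> ground n k \<times> ground n k \<and> irrefl L \<and> trans L \<and> total_on (ground n k) L \<and>
     (\<forall>x y. crown_less n k x y \<longrightarrow> (x, y) \<in> L)"

definition reversible :: "nat \<Rightarrow> nat \<Rightarrow> (elt \<times> elt) set \<Rightarrow> bool" where
  "reversible n k R \<longleftrightarrow> R \<subseteq> Inc n k \<and>
     (\<exists>L. linear_extension n k L \<and> (\<forall>(a, b) \<in> R. (b, a) \<in> L))"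

definition maximal_reversible :: "nat \<Rightarrow> nat \<Rightarrow> (elt \<times> elt) set \<Rightarrow> bool" where
  "maximal_reversible n k R \<longleftrightarrow> reversible n k R \<and>
     (\<forall>R'. reversible n k R' \<and> R \<subseteq> R' \<longrightarrow> R' = R)"

definition Bset :: "elt \<Rightarrow> (elt \<times> elt) set \<Rightarrow> elt set" where
  "Bset a R = {b. (a, b) \<in> R}"

definition Aset :: "nat \<Rightarrow> nat \<Rightarrow> (elt \<times> elt) set \<Rightarrow> elt set" where
  "Aset n k R = {Aelt i | i. i < n + k \<and> Bset (Aelt i) R \<noteq> {}}"

definition consistent_labeling :: "nat \<Rightarrow> nat \<Rightarrow> (elt \<times> elt) set \<Rightarrow> (nat \<Rightarrow> elt) \<Rightarrow> bool" where
  "consistent_labeling n k R x \<longleftrightarrow> bij_betw x {1..k+1} (Aset n k R) \<and>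
     (\<forall>\<alpha>\<in>{1..k+1}. \<forall>\<beta>\<in>{1..k+1}. \<alpha> < \<beta> \<longrightarrow> Bset (x \<beta>) R \<subseteq> Bset (x \<alpha>) R)"

end

theory Submission
  imports Defs
begin

text \<open>Since the sets \<open>B(x\<^sub>\<alpha>, R)\<close> form a chain, the \<open>i\<close> elements \<open>x\<^sub>1, \<dots>, x\<^sub>i\<close> are all
  incomparable to every element of \<open>T = B(x\<^sub>i, R)\<close>; let \<open>S\<close> be their index set. Identify both index sets with subsets of \<open>\<int>/N\<close>, \<open>N = n + k\<close>;
  incomparability says that the cyclic offset from each \<open>p \<in> S\<close> to each \<open>j \<in> T\<close> lies in
  \<open>{0..k}\<close>. Take \<open>M \<in> S\<close> closest behind some \<open>j\<^sub>0 \<in> T\<close>. Measured from \<open>M\<close>, the points of \<open>T\<close> and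
  the points \<open>s + k + 1\<close> (\<open>s \<in> S - {M}\<close>) occupy disjoint positions of \<open>{0..k}\<close>, the latter
  missing \<open>T\<close> because they are at offset \<open>k + 1\<close> from \<open>s\<close>. Hence \<open>|S| + |T| \<le> k + 2\<close>.\<close>

lemma inj_on_diff_mod:
  fixes N c :: int
  shows "inj_on (\<lambda>x. (x - c) mod N) {0..<N}"
proof (rule inj_onI)
  fix x y assume "x \<in> {0..<N}" "y \<in> {0..<N}" "(x - c) mod N = (y - c) mod N"
  then show "x = y" by (metis diff_diff_eq2 diff_right_commute mod_eq_dvd_iff mod_pos_pos_trivial
      atLeastLessThan_iff diff_add_cancel)
qed

lemma offset_past_nearest_in_window:
  fixes N k s M j0 :: int
  assumes kN: "k + 2 \<le> N" and "s \<in> {0..<N}" "M \<in> {0..<N}" "s \<noteq> M"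
    and nearest: "(j0 - M) mod N \<le> (j0 - s) mod N" and "(j0 - s) mod N \<le> k"
  shows "(s - (M - k - 1)) mod N \<in> {1..k}"
proof -
  define \<delta> where "\<delta> p = (j0 - p) mod N" for p
  have N: "N > 0" using assms(2) by simp
  have "\<delta> s \<noteq> \<delta> M"
  proof
    assume "\<delta> s = \<delta> M"
    then have "(s - j0) mod N = (M - j0) mod N"
      unfolding \<delta>_def by (simp add: mod_eq_dvd_iff dvd_diff_commute)
    then show False using inj_on_diff_mod[of j0 N] assms(2-4) by (auto dest: inj_onD)
  qed
  moreover have "0 \<le> \<delta> M" "\<delta> M \<le> \<delta> s" "\<delta> s \<le> k"
    using N assms(5,6) unfolding \<delta>_def by auto
  ultimately have "(k + 1 - (\<delta> s - \<delta> M)) mod N \<in> {1..k}"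
    using kN by (subst mod_pos_pos_trivial) auto
  moreover have "(k + 1 - (\<delta> s - \<delta> M)) mod N = (k + 1 - ((j0 - s) - (j0 - M))) mod N"
    unfolding \<delta>_def by (metis mod_diff_eq mod_diff_right_eq)
  ultimately show ?thesis by (simp add: algebra_simps)
qed

lemma card_add_card_le_if_mod_diff_le:
  fixes N k :: int and S T :: "int set"
  assumes kN: "k + 2 \<le> N" and SN: "S \<subseteq> {0..<N}" and TN: "T \<subseteq> {0..<N}"
    and "S \<noteq> {}" and "T \<noteq> {}"
    and close: "\<forall>p\<in>S. \<forall>j\<in>T. (j - p) mod N \<le> k"
  shows "int (card S) + int (card T) \<le> k + 2"
proof -
  have finS: "finite S" using SN by (auto intro: finite_subset)
  have N: "N > 0" using SN \<open>S \<noteq> {}\<close> by fastforce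
  obtain j0 where j0: "j0 \<in> T" using \<open>T \<noteq> {}\<close> by blast
  define \<delta> where "\<delta> p = (j0 - p) mod N" for p
  define M where "M = arg_min_on \<delta> S"
  have M: "M \<in> S" and M_least: "\<And>s. s \<in> S \<Longrightarrow> \<delta> M \<le> \<delta> s"
    unfolding M_def using finS \<open>S \<noteq> {}\<close> by (auto intro: arg_min_if_finite arg_min_least)
  have k: "0 \<le> k" using close M j0 N by (meson order.trans pos_mod_sign)
  define g where "g j = (j - M) mod N" for j
  define h where "h s = (s - (M - k - 1)) mod N" for s
  have gT: "g ` T \<subseteq> {0..k}"
  proof
    fix y assume "y \<in> g ` T"
    then obtain j where "j \<in> T" "y = (j - M) mod N" unfolding g_def by blast
    then show "y \<in> {0..k}" using close M N by auto
  qed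
  have hS: "h ` (S - {M}) \<subseteq> {0..k}"
  proof
    fix y assume "y \<in> h ` (S - {M})"
    then obtain s where s: "s \<in> S" "s \<noteq> M" and y: "y = h s" by blast
    have "h s \<in> {1..k}"
      unfolding h_def using s M SN M_least[OF s(1)] j0 close
      by (intro offset_past_nearest_in_window[OF kN]) (auto simp: \<delta>_def)
    then show "y \<in> {0..k}" using y by simp
  qed
  have disj: "g ` T \<inter> h ` (S - {M}) = {}"
  proof -
    have "g j \<noteq> h s" if "j \<in> T" "s \<in> S" for j s
    proof
      assume "g j = h s"
      then have "(j - s) mod N = (k + 1) mod N"
        unfolding g_def h_def by (simp add: mod_eq_dvd_iff algebra_simps)
      moreover have "(k + 1) mod N = k + 1" using k kN by (intro mod_pos_pos_trivial) auto
      ultimately show False using close that by fastforce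
    qed
    then show ?thesis by blast
  qed
  have "card (g ` T) = card T"
    unfolding g_def by (rule card_image) (rule inj_on_subset[OF inj_on_diff_mod TN])
  moreover have "card (h ` (S - {M})) = card S - 1"
    unfolding h_def using inj_on_subset[OF inj_on_diff_mod, of "S - {M}"] SN M
    by (subst card_image) auto
  moreover have "card (g ` T \<union> h ` (S - {M})) \<le> card {0..k}"
    using gT hS by (intro card_mono) auto
  ultimately have "card T + (card S - 1) \<le> nat (k + 1)"
    using disj finS TN by (simp add: card_Un_disjoint finite_subset)
  moreover have "card S \<ge> 1" using finS \<open>S \<noteq> {}\<close> by (simp add: Suc_le_eq card_gt_0_iff)
  ultimately show ?thesis using k by (simp add: le_nat_iff of_nat_diff)
qed

lemma crown_inc_iff_mod_diff:
  assumes "i < n + k"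
  shows "crown_inc n k i j \<longleftrightarrow> (int j - int i) mod int (n + k) \<le> int k"
proof -
  have "int ((j + (n + k) - i) mod (n + k)) = (int j + int (n + k) - int i) mod int (n + k)"
    using assms by (simp add: of_nat_mod of_nat_diff)
  also have "\<dots> = (int j - int i) mod int (n + k)"
    by (metis add.commute add_diff_eq mod_add_self2)
  finally have "int ((j + (n + k) - i) mod (n + k)) = (int j - int i) mod int (n + k)" .
  then show ?thesis unfolding crown_inc_def by linarith
qed

lemma card_add_card_le_if_crown_inc:
  fixes S T :: "nat set"
  assumes "2 \<le> n" and SN: "S \<subseteq> {..<n + k}" and TN: "T \<subseteq> {..<n + k}"
    and "S \<noteq> {}" and "T \<noteq> {}"
    and inc: "\<forall>p\<in>S. \<forall>j\<in>T. crown_inc n k p j"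
  shows "card S + card T \<le> k + 2"
proof -
  have "int (card (int ` S)) + int (card (int ` T)) \<le> int k + 2"
  proof (rule card_add_card_le_if_mod_diff_le[where N = "int (n + k)"])
    show "\<forall>p\<in>int ` S. \<forall>j\<in>int ` T. (j - p) mod int (n + k) \<le> int k"
      using inc SN crown_inc_iff_mod_diff by blast
  qed (use assms in auto)
  then show ?thesis by (simp add: card_image)
qed

lemma card_add_card_Bset_le:
  assumes RInc: "R \<subseteq> Inc n k" and "2 \<le> n" and XA: "X \<subseteq> Aset n k R" and "y \<in> X"
    and below: "\<forall>a\<in>X. Bset y R \<subseteq> Bset a R"
  shows "card X + card (Bset y R) \<le> k + 2"
proof -
  define S where "S = {p. Aelt p \<in> X}"
  define T where "T = {j. Belt j \<in> Bset y R}"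
  have X: "X = Aelt ` S" using XA unfolding S_def Aset_def by auto
  have B: "Bset y R = Belt ` T" using RInc unfolding T_def Bset_def Inc_def by auto
  have "card S + card T \<le> k + 2"
  proof (rule card_add_card_le_if_crown_inc[OF \<open>2 \<le> n\<close>])
    show "S \<subseteq> {..<n + k}" using XA unfolding S_def Aset_def by auto
    show "T \<subseteq> {..<n + k}" using RInc unfolding T_def Bset_def Inc_def by auto
    show "S \<noteq> {}" using \<open>y \<in> X\<close> X by blast
    show "T \<noteq> {}" using \<open>y \<in> X\<close> XA B unfolding Aset_def by auto
    show "\<forall>p\<in>S. \<forall>j\<in>T. crown_inc n k p j"
      using below RInc unfolding S_def T_def Bset_def Inc_def by blast
  qed
  then show ?thesis unfolding X B by (simp add: card_image inj_on_def)
qed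

theorem proposition3p1:
  fixes n k :: nat and R :: "(elt \<times> elt) set" and x :: "nat \<Rightarrow> elt"
  assumes "n \<ge> 3"
    and "maximal_reversible n k R"
    and "consistent_labeling n k R x"
  shows "\<forall>i\<in>{1..k+1}. card (Bset (x i) R) \<le> k + 2 - i"
proof
  fix i assume i: "i \<in> {1..k+1}"
  have RInc: "R \<subseteq> Inc n k"
    using assms(2) unfolding maximal_reversible_def reversible_def by blast
  have bij: "bij_betw x {1..k+1} (Aset n k R)"
    and chain: "\<forall>\<alpha>\<in>{1..k+1}. \<forall>\<beta>\<in>{1..k+1}. \<alpha> < \<beta> \<longrightarrow> Bset (x \<beta>) R \<subseteq> Bset (x \<alpha>) R"
    using assms(3) unfolding consistent_labeling_def by auto
  have sub: "{1..i} \<subseteq> {1..k+1}" using i by auto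
  have "card (x ` {1..i}) + card (Bset (x i) R) \<le> k + 2"
  proof (rule card_add_card_Bset_le[OF RInc])
    show "x ` {1..i} \<subseteq> Aset n k R" using bij sub by (auto simp: bij_betw_def)
    show "\<forall>a\<in>x ` {1..i}. Bset (x i) R \<subseteq> Bset a R"
    proof
      fix a assume "a \<in> x ` {1..i}"
      then obtain \<alpha> where "\<alpha> \<in> {1..i}" "a = x \<alpha>" by blast
      then show "Bset (x i) R \<subseteq> Bset a R"
        using chain sub i by (cases "\<alpha> = i") auto
    qed
  qed (use assms(1) i in auto)
  moreover have "card (x ` {1..i}) = i"
    using inj_on_subset[OF bij_betw_imp_inj_on[OF bij] sub] by (simp add: card_image)
  ultimately show "card (Bset (x i) R) \<le> k + 2 - i" by simp
qed

end
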